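(* Consider Method 2.4 (described in the context), with a fixed $\varepsilon>0$, and suppose it does not terminate and the numbers $\delta_k>0$ satisfy $\delta_k\to0$. Then the sequences $\{x_k\},\{\sigma_k\}$ are defined for all $k\in K$ and $\lim_{k\to\infty}g(x_k)=f^*+\varepsilon$, $\lim_{k\to\infty}\sigma_k=f^*+\varepsilon$, where $g(x)=f(x)+\varepsilon$.
   Context: Setting: $D\subset\mathbb{R}^n$ closed convex; $f$ convex on $\mathbb{R}^n$ attaining its minimum $f^*$ on $D$; $X^*=\{x\in D:f(x)=f^*\}$; fixed $\varepsilon>0$, $g(x)=f(x)+\varepsilon$, $g^*=\min_Dg=f^*+\varepsilon$; $\operatorname{epi}(g,\mathbb{R}^n)=\{(x,\gamma):\gamma\ge g(x)\}$; $W^1(u,Q)=\{a\in\mathbb{R}^{n+1}:\|a\|=1,\ \langle a,v-u\rangle\le0\ \forall v\in Q\}$; $K=\{0,1,\dots\}$; $J=\{1,\dots,m\}$. Method 2.4: fix $x^*\in X^*$; choose $v^j\in\operatorname{int}\operatorname{epi}(g,\mathbb{R}^n)$, $j\in J$, a closed convex bounded $G_0\subset D$ with $x^*\in G_0$, a closed convex $M_0\subseteq\mathbb{R}^{n+1}$ with $\operatorname{epi}(g,\mathbb{R}^n)\subset M_0$, numbers $\delta_0>0$, $\bar\gamma_0\le g^*$, constant $q\ge1$; $i=k=0$. Step 1: $u_i=(y_i,\gamma_i)$ solves $\min\{\gamma:(x,\gamma)\in M_i,\ x\in G_i,\ \gamma\ge\bar\gamma_i\}$; if $\gamma_i=g(y_i)$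 stop. Step 2: for each $j\in J$ choose $\bar u_i^j$ in the open segment $(v^j,u_i)$ with $\bar u_i^j\notin\operatorname{int}\operatorname{epi}(g,\mathbb{R}^n)$ and $u_i+q_i^j(\bar u_i^j-u_i)\in\operatorname{epi}(g,\mathbb{R}^n)$ for some $q_i^j\in[1,q]$. Step 3: if $\|\bar u_i^j-u_i\|>\delta_k$ for all $j\in J$, choose closed convex $Q_i\subseteq M_i$ with $\operatorname{epi}(g,\mathbb{R}^n)\subset Q_i$ and go to Step 5. Step 4: choose closed convex $Q_i\supseteq\operatorname{epi}(g,\mathbb{R}^n)$; set $i_k=i$, $\sigma_k=\gamma_{i_k}$; choose $x_k\in G_{i_k}$ with $g(x_k)\le g(y_{i_k})$; choose $\delta_{k+1}>0$; $k\leftarrow k+1$. Step 5: for $j\in J$ choose nonempty finite $A_i^j\subset W^1(\bar u_i^j,\operatorname{epi}(g,\mathbb{R}^n))$; $M_{i+1}=Q_i\cap\bigcap_{j\in J}\{u\in\mathbb{R}^{n+1}:\langle a,u-\bar u_i^j\rangle\le0\ \forall a\in A_i^j\}$. Step 6: choose closed convex $G_{i+1}\subseteq G_0$ with $x^*\in G_{i+1}$ and $\bar\gamma_{i+1}\in[\bar\gamma_0,g^*]$; $i\leftarrow i+1$; go to Step 1. *)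

theory Defs
  imports "HOL-Analysis.Analysis"
begin

definition epi :: "('a \<Rightarrow> real) \<Rightarrow> ('a \<times> real) set" where
  "epi g = {(x, \<gamma>). \<gamma> \<ge> g x}"

definition W1 :: "'b::real_inner \<Rightarrow> 'b set \<Rightarrow> 'b set" where
  "W1 u Q = {a. norm a = 1 \<and> (\<forall>v\<in>Q. inner a (v - u) \<le> 0)}"

end

(* All iterates u_i = (y_i, gamma_i) stay in a bounded set, because y_i is in G_0 and
   gbar_0 <= gamma_i <= g*, as the point x* at level g* is feasible for every auxiliary problem.
   If Step 4 happened only finitely often, delta would be frozen at some delta > 0, and every
   later cut, taken at a point of the segment from an interior point v of the epigraph to u_i
   at distance more than delta from u_i, would keep all later iterates at distance at least
   r delta / R from u_i (r the radius of a ball around v inside the epigraph, R a bound on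
   |u_i - v|), contradicting Bolzano-Weierstrass.  Hence every k is reached.  At the
   iteration i_k the point u_{i_k} is within q delta_k of the epigraph, so by uniform
   continuity of g on bounded sets the gap g(y_{i_k}) - gamma_{i_k} tends to 0; finally
   gamma_{i_k} <= g* <= g(x_k) <= g(y_{i_k}) and sigma_k = gamma_{i_k}. *)

theory Submission
  imports Defs
begin

lemma cut_depth_along_segment:
  fixes E :: "'b::real_inner set"
  assumes "cball p r \<subseteq> E" "0 \<le> r" "a \<in> W1 b E" "b \<in> open_segment p w"
  shows "r * norm (w - b) \<le> norm (w - p) * inner a (w - b)"
proof -
  obtain t where t: "0 < t" "t < 1" and b: "b = p + t *\<^sub>R (w - p)"
    using assms(4) unfolding in_segment by (auto simp: algebra_simps)
  have a: "norm a = 1" "\<forall>z\<in>E. inner a (z - b) \<le> 0"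
    using assms(3) unfolding W1_def by auto
  have "p + r *\<^sub>R a \<in> E"
    using assms(1,2) a(1) by (auto simp: dist_norm)
  then have "inner a (p + r *\<^sub>R a - b) \<le> 0"
    using a(2) by blast
  then have "r \<le> t * inner a (w - p)"
    using a(1) by (simp add: b inner_diff_right inner_add_right power2_norm_eq_inner[symmetric])
  moreover from this have "0 \<le> inner a (w - p)"
    using t(1) assms(2) by (metis order_trans zero_le_mult_iff not_less)
  ultimately have r_le: "r \<le> inner a (w - p)"
    using t by (meson mult_left_le_one_le order_trans less_imp_le)
  have wb: "w - b = (1 - t) *\<^sub>R (w - p)"
    by (simp add: b algebra_simps)
  have "r * norm (w - b) = (1 - t) * norm (w - p) * r"
    using t by (simp add: wb)
  also have "\<dots> \<le> (1 - t) * norm (w - p) * inner a (w - p)"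
    using t r_le by (intro mult_left_mono) auto
  also have "\<dots> = norm (w - p) * inner a (w - b)"
    by (simp add: wb)
  finally show ?thesis .
qed

lemma cut_separates_from_segment_end:
  fixes E :: "'b::real_inner set"
  assumes "cball p r \<subseteq> E" "0 \<le> r" "a \<in> W1 b E" "b \<in> open_segment p w"
    and "inner a (u - b) \<le> 0"
  shows "r * norm (w - b) \<le> norm (w - p) * norm (u - w)"
proof -
  have "norm a = 1"
    using assms(3) unfolding W1_def by simp
  then have "inner a (w - u) \<le> norm (u - w)"
    by (metis Cauchy_Schwarz_ineq2 abs_le_D1 mult_1 norm_minus_commute)
  moreover have "inner a (w - b) \<le> inner a (w - u)"
    using assms(5) by (simp add: inner_diff_right)
  ultimately show ?thesis
    using cut_depth_along_segment[OF assms(1-4)] by (meson mult_left_mono norm_ge_zero order_trans)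
qed

lemma bounded_seq_has_close_terms:
  fixes U :: "nat \<Rightarrow> 'b::heine_borel"
  assumes "bounded (range U)" "0 < c"
  shows "\<exists>i l. i0 \<le> i \<and> i < l \<and> dist (U l) (U i) < c"
proof -
  obtain L r where r: "strict_mono r" "(U \<circ> r) \<longlonglongrightarrow> L"
    using assms(1) bounded_imp_convergent_subsequence by blast
  then obtain N where N: "\<forall>n\<ge>N. \<forall>n'\<ge>N. dist ((U \<circ> r) n) ((U \<circ> r) n') < c"
    using metric_CauchyD[OF LIMSEQ_imp_Cauchy assms(2)] by blast
  have "i0 \<le> r (N + i0)" "r (N + i0) < r (Suc (N + i0))"
    using r(1) seq_suble[OF r(1), of "N + i0"] by (auto simp: strict_mono_def)
  moreover have "dist (U (r (Suc (N + i0)))) (U (r (N + i0))) < c"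
    using N by simp
  ultimately show ?thesis by blast
qed

lemma counter_constant:
  assumes "\<And>n. c (Suc n) = (if P n then Suc (c n) else c n)"
    and "i \<le> l" "\<forall>n\<in>{i..<l}. \<not> P n"
  shows "c l = c i"
  using assms(2,3) by (induction l rule: dec_induct) (auto simp: assms(1))

lemma counter_reaches_every_value:
  assumes step: "\<And>n. c (Suc n) = (if P n then Suc (c n) else c n)"
    and "c 0 = 0" and "frequently P sequentially"
  shows "\<exists>i. c i = k \<and> P i"
proof -
  have next_P: "\<exists>i. c i = c n \<and> P i" for n
  proof -
    have "\<exists>i. n \<le> i \<and> P i"
      using assms(3) unfolding frequently_sequentially by blast
    then obtain i where i: "n \<le> i" "P i" and least: "\<forall>l<i. \<not> (n \<le> l \<and> P l)"
      unfolding exists_least_iff[of "\<lambda>i. n \<le> i \<and> P i"] by blast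
    have "\<forall>l\<in>{n..<i}. \<not> P l"
      using least by simp
    then have "c i = c n"
      by (rule counter_constant[where c = c and P = P, OF step i(1)])
    with i show ?thesis by blast
  qed
  show ?thesis
  proof (induction k)
    case 0
    show ?case using next_P[of 0] assms(2) by simp
  next
    case (Suc k)
    then obtain i where "c i = k" "P i" by blast
    then show ?case using next_P[of "Suc i"] step[of i] by auto
  qed
qed

lemma continuous_on_dist_tendsto_zero:
  fixes f :: "'b::heine_borel \<Rightarrow> 'c::metric_space"
  assumes f: "continuous_on UNIV f" and X: "bounded (range X)"
    and XY: "(\<lambda>n. dist (X n) (Y n)) \<longlonglongrightarrow> 0"
  shows "(\<lambda>n. dist (f (X n)) (f (Y n))) \<longlonglongrightarrow> 0"
proof -
  obtain e x0 where e: "range X \<subseteq> cball x0 e"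
    using X bounded_subset_cball by blast
  obtain C where C: "\<forall>n. norm (dist (X n) (Y n)) \<le> C"
    using BseqD[OF convergent_imp_Bseq[OF convergentI[OF XY]]] by blast
  define K where "K = cball x0 (e + C)"
  have X_e: "dist x0 (X n) \<le> e" for n
    using e by (auto simp: subset_iff)
  have in_K: "X n \<in> K" "Y n \<in> K" for n
  proof -
    have "dist x0 (Y n) \<le> dist x0 (X n) + dist (X n) (Y n)"
      by (rule dist_triangle)
    moreover have "dist (X n) (Y n) \<le> C"
      using C by simp
    ultimately show "X n \<in> K" "Y n \<in> K"
      using X_e[of n] zero_le_dist[of "X n" "Y n"] unfolding K_def mem_cball by linarith+
  qed
  have "uniformly_continuous_on K f"
    unfolding K_def by (rule compact_uniformly_continuous[OF continuous_on_subset[OF f] compact_cball]) simp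
  then show ?thesis
    using in_K XY unfolding uniformly_continuous_on_sequentially by simp
qed


text \<open>Here \<open>kc i\<close> is the value of the counter \<open>k\<close> during
  iteration \<open>i\<close>, and \<open>ik k\<close> below is the iteration \<open>i\<^sub>k\<close> at which Step 4 ends stage \<open>k\<close>.\<close>
locale epi_cutting_plane =
  fixes g :: "'a::euclidean_space \<Rightarrow> real" and gstar :: real and xstar :: 'a
    and m :: nat and v :: "nat \<Rightarrow> 'a \<times> real" and q :: real
    and G :: "nat \<Rightarrow> 'a set" and M Q :: "nat \<Rightarrow> ('a \<times> real) set"
    and gbar :: "nat \<Rightarrow> real"
    and y :: "nat \<Rightarrow> 'a" and gam :: "nat \<Rightarrow> real"
    and ubar :: "nat \<Rightarrow> nat \<Rightarrow> 'a \<times> real" and qq :: "nat \<Rightarrow> nat \<Rightarrow> real"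
    and A :: "nat \<Rightarrow> nat \<Rightarrow> ('a \<times> real) set"
    and kc :: "nat \<Rightarrow> nat" and delta :: "nat \<Rightarrow> real"
    and sigma :: "nat \<Rightarrow> real" and x :: "nat \<Rightarrow> 'a"
  assumes g_cont: "continuous_on UNIV g"
    and gstar_le_G0: "\<forall>z\<in>G 0. gstar \<le> g z"
    and xstar: "g xstar = gstar" "xstar \<in> G 0"
    and m: "m \<ge> 1"
    and v: "\<forall>j\<in>{1..m}. v j \<in> interior (epi g)"
    and G0_bounded: "bounded (G 0)"
    and epi_M0: "epi g \<subseteq> M 0"
    and gbar0: "gbar 0 \<le> gstar"
    and kc0: "kc 0 = 0"
    and step1: "\<forall>i. (y i, gam i) \<in> M i \<and> y i \<in> G i \<and> gam i \<ge> gbar i \<and>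
                 (\<forall>z \<gamma>. (z, \<gamma>) \<in> M i \<and> z \<in> G i \<and> \<gamma> \<ge> gbar i \<longrightarrow> gam i \<le> \<gamma>)"
    and step2: "\<forall>i. \<forall>j\<in>{1..m}. ubar i j \<in> open_segment (v j) (y i, gam i) \<and>
                 1 \<le> qq i j \<and> qq i j \<le> q \<and>
                 (y i, gam i) + qq i j *\<^sub>R (ubar i j - (y i, gam i)) \<in> epi g"
    and epi_Q: "\<forall>i. epi g \<subseteq> Q i"
    and step3: "\<forall>i. (\<forall>j\<in>{1..m}. norm (ubar i j - (y i, gam i)) > delta (kc i)) \<longrightarrow>
                 Q i \<subseteq> M i \<and> kc (Suc i) = kc i"
    and step4: "\<forall>i. (\<exists>j\<in>{1..m}. norm (ubar i j - (y i, gam i)) \<le> delta (kc i)) \<longrightarrow>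
                 sigma (kc i) = gam i \<and> x (kc i) \<in> G i \<and>
                 g (x (kc i)) \<le> g (y i) \<and> kc (Suc i) = Suc (kc i)"
    and step5A: "\<forall>i. \<forall>j\<in>{1..m}. A i j \<noteq> {} \<and> A i j \<subseteq> W1 (ubar i j) (epi g)"
    and step5M: "\<forall>i. M (Suc i) = Q i \<inter>
                 (\<Inter>j\<in>{1..m}. {u. \<forall>a\<in>A i j. inner a (u - ubar i j) \<le> 0})"
    and step6: "\<forall>i. G (Suc i) \<subseteq> G 0 \<and> xstar \<in> G (Suc i) \<and>
                 gbar 0 \<le> gbar (Suc i) \<and> gbar (Suc i) \<le> gstar"
    and delta_pos: "\<forall>k. delta k > 0"
    and delta_lim: "delta \<longlonglongrightarrow> 0"
begin

abbreviation u :: "nat \<Rightarrow> 'a \<times> real" where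
  "u i \<equiv> (y i, gam i)"

definition executes_step4 :: "nat \<Rightarrow> bool" where
  "executes_step4 i \<longleftrightarrow> (\<exists>j\<in>{1..m}. norm (ubar i j - u i) \<le> delta (kc i))"

lemma kc_Suc: "kc (Suc i) = (if executes_step4 i then Suc (kc i) else kc i)"
  using step3 step4 unfolding executes_step4_def by (auto simp: not_le)

lemma epi_subset_M: "epi g \<subseteq> M i"
proof (induction i)
  case 0
  show ?case by (rule epi_M0)
next
  case (Suc i)
  have "inner a (w - ubar i j) \<le> 0" if "w \<in> epi g" "j \<in> {1..m}" "a \<in> A i j" for w j a
    using step5A that unfolding W1_def by blast
  then show ?case
    using step5M epi_Q by blast
qed

lemma G_subset_G0: "G i \<subseteq> G 0"
  using step6 by (cases i) auto

lemma xstar_in_G: "xstar \<in> G i"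
  using step6 xstar by (cases i) auto

lemma gbar_bounds: "gbar 0 \<le> gbar i" "gbar i \<le> gstar"
  using step6 gbar0 by (cases i; auto)+

lemma gam_le_gstar: "gam i \<le> gstar"
proof -
  have "(xstar, gstar) \<in> M i"
    using epi_subset_M xstar(1) unfolding epi_def by auto
  then show ?thesis
    using step1 xstar_in_G gbar_bounds by blast
qed

lemma gstar_le_g_y: "gstar \<le> g (y i)"
  using gstar_le_G0 G_subset_G0 step1 by blast

lemma bounded_y: "bounded (range y)"
proof -
  have "range y \<subseteq> G 0"
    using step1 G_subset_G0 by blast
  then show ?thesis
    using G0_bounded bounded_subset by blast
qed

lemma bounded_iterates: "bounded (range u)"
proof -
  have "range gam \<subseteq> {gbar 0..gstar}"
    using gam_le_gstar gbar_bounds(1) step1 order_trans by fastforce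
  then have "bounded (range gam)"
    using bounded_closed_interval bounded_subset by blast
  moreover have "range u \<subseteq> range y \<times> range gam"
    by auto
  ultimately show ?thesis
    using bounded_y bounded_Times bounded_subset by blast
qed

lemma M_antimono_without_step4:
  assumes "i \<le> l" "\<forall>n\<in>{i..<l}. \<not> executes_step4 n"
  shows "M l \<subseteq> M i"
  using assms
proof (induction l rule: dec_induct)
  case (step n)
  then have "\<not> executes_step4 n"
    by simp
  then have "Q n \<subseteq> M n"
    using step3 unfolding executes_step4_def by (auto simp: not_le)
  then have "M (Suc n) \<subseteq> M n"
    using step5M by auto
  with step show ?case
    by simp
qed simp

lemma kc_constant_without_step4:
  "i \<le> l \<Longrightarrow> \<forall>n\<in>{i..<l}. \<not> executes_step4 n \<Longrightarrow> kc l = kc i"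
  by (rule counter_constant[where c = kc and P = executes_step4, OF kc_Suc])

lemma iterates_separated:
  assumes no_step4: "\<forall>n\<ge>i0. \<not> executes_step4 n"
  shows "\<exists>c>0. \<forall>i l. i0 \<le> i \<longrightarrow> i < l \<longrightarrow> c \<le> dist (u l) (u i)"
proof -
  have m1: "1 \<in> {1..m}"
    using m by simp
  obtain r where r: "0 < r" "cball (v 1) r \<subseteq> epi g"
    using v m1 mem_interior_cball by blast
  obtain B where B: "0 < B" "\<forall>i. norm (u i) \<le> B"
    using bounded_iterates unfolding bounded_pos by blast
  define R where "R = B + norm (v 1)"
  have R: "0 < R" "norm (u i - v 1) \<le> R" for i
    using B(1) B(2)[rule_format, of i] norm_triangle_ineq4[of "u i" "v 1"] norm_ge_zero[of "v 1"]
    unfolding R_def by linarith+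
  define c where "c = r * delta (kc i0) / R"
  have separated: "c \<le> dist (u l) (u i)" if "i0 \<le> i" "i < l" for i l
  proof -
    define b where "b = ubar i 1"
    obtain a where a: "a \<in> A i 1"
      using step5A m1 by blast
    have "u l \<in> M (Suc i)"
      using M_antimono_without_step4[of "Suc i" l] no_step4 that step1 by auto
    then have cut: "inner a (u l - b) \<le> 0"
      using step5M a m1 unfolding b_def by blast
    have "a \<in> W1 b (epi g)" "b \<in> open_segment (v 1) (u i)"
      using step5A step2 m1 a unfolding b_def by blast+
    then have "r * norm (u i - b) \<le> norm (u i - v 1) * norm (u l - u i)"
      using cut_separates_from_segment_end[OF r(2) less_imp_le[OF r(1)] _ _ cut] by blast
    also have "\<dots> \<le> R * dist (u l) (u i)"
      using R(2) by (simp add: dist_norm mult_right_mono)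
    finally have "r * norm (u i - b) \<le> R * dist (u l) (u i)" .
    moreover have "delta (kc i0) < norm (u i - b)"
      using no_step4 that kc_constant_without_step4[of i0 i] m1
      unfolding executes_step4_def b_def by (auto simp: not_le norm_minus_commute)
    then have "r * delta (kc i0) < r * norm (u i - b)"
      using r(1) by simp
    ultimately have "r * delta (kc i0) \<le> R * dist (u l) (u i)"
      by linarith
    then show ?thesis
      using R(1) unfolding c_def by (simp add: divide_le_eq mult.commute)
  qed
  have "0 < c"
    using r(1) R(1) delta_pos unfolding c_def by simp
  with separated show ?thesis
    by blast
qed

lemma frequently_step4: "frequently executes_step4 sequentially"
proof (rule ccontr)
  assume "\<not> frequently executes_step4 sequentially"
  then obtain i0 where "\<forall>n\<ge>i0. \<not> executes_step4 n"
    unfolding frequently_sequentially by blast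
  then obtain c where "0 < c" "\<forall>i l. i0 \<le> i \<longrightarrow> i < l \<longrightarrow> c \<le> dist (u l) (u i)"
    using iterates_separated by blast
  moreover obtain i l where "i0 \<le> i" "i < l" "dist (u l) (u i) < c"
    using bounded_seq_has_close_terms[OF bounded_iterates \<open>0 < c\<close>] by blast
  ultimately show False
    by (meson not_le)
qed

definition ik :: "nat \<Rightarrow> nat" where
  "ik k = (SOME i. kc i = k \<and> executes_step4 i)"

lemma ik_spec: "kc (ik k) = k \<and> executes_step4 (ik k)"
  unfolding ik_def
  by (rule someI_ex, rule counter_reaches_every_value[where c = kc and P = executes_step4,
        OF kc_Suc kc0 frequently_step4])

lemma kc_ik: "kc (ik k) = k"
  using ik_spec by simp

lemma executes_step4_ik: "executes_step4 (ik k)"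
  using ik_spec by simp

lemma step4_at_ik: "sigma k = gam (ik k)" "x k \<in> G (ik k)" "g (x k) \<le> g (y (ik k))"
  using step4[rule_format, of "ik k"] executes_step4_ik[of k] kc_ik[of k]
  unfolding executes_step4_def by auto

lemma epi_point_near_ik: "\<exists>w\<in>epi g. norm (w - u (ik k)) \<le> q * delta k"
proof -
  obtain j where j: "j \<in> {1..m}" "norm (ubar (ik k) j - u (ik k)) \<le> delta k"
    using kc_ik[of k] executes_step4_ik[of k] unfolding executes_step4_def by auto
  define w where "w = u (ik k) + qq (ik k) j *\<^sub>R (ubar (ik k) j - u (ik k))"
  have qq: "1 \<le> qq (ik k) j" "qq (ik k) j \<le> q" and "w \<in> epi g"
    using step2 j(1) unfolding w_def by blast+
  moreover have "norm (w - u (ik k)) \<le> q * delta k"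
    using qq j(2) unfolding w_def by (simp add: mult_mono)
  ultimately show ?thesis
    by blast
qed

definition gap :: "nat \<Rightarrow> real" where
  "gap k = g (y (ik k)) - gam (ik k)"

lemma gap_bounds: "0 \<le> gap k" "gam (ik k) = g (y (ik k)) - gap k"
  using gam_le_gstar[of "ik k"] gstar_le_g_y[of "ik k"] unfolding gap_def by simp_all

lemma gap_tendsto_zero: "gap \<longlonglongrightarrow> 0"
proof -
  have "\<forall>k. \<exists>w. w \<in> epi g \<and> norm (w - u (ik k)) \<le> q * delta k"
    using epi_point_near_ik by blast
  then obtain w where w: "\<forall>k. w k \<in> epi g \<and> norm (w k - u (ik k)) \<le> q * delta k"
    by (rule choice[THEN exE])
  then have w_epi: "w k \<in> epi g" and w_near: "norm (w k - u (ik k)) \<le> q * delta k" for k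
    by simp_all
  have near: "(\<lambda>k. norm (w k - u (ik k))) \<longlonglongrightarrow> 0"
    by (rule Lim_null_comparison[OF always_eventually tendsto_mult_left_zero[OF delta_lim, of q]])
      (simp add: w_near mult.commute)
  have w_minus_u: "w k - u (ik k) = (fst (w k) - y (ik k), snd (w k) - gam (ik k))" for k
    by (cases "w k") simp
  have fst_near: "dist (y (ik k)) (fst (w k)) \<le> norm (w k - u (ik k))" for k
    using norm_fst_le[of "fst (w k) - y (ik k)" "snd (w k) - gam (ik k)"]
    by (simp add: w_minus_u dist_norm norm_minus_commute)
  have snd_near: "snd (w k) - gam (ik k) \<le> norm (w k - u (ik k))" for k
    using norm_snd_le[where x = "fst (w k) - y (ik k)" and y = "snd (w k) - gam (ik k)"]
    by (simp add: w_minus_u)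
  have "bounded (range (\<lambda>k. y (ik k)))"
    by (rule bounded_subset[OF bounded_y]) auto
  moreover have "(\<lambda>k. dist (y (ik k)) (fst (w k))) \<longlonglongrightarrow> 0"
    by (rule Lim_null_comparison[OF always_eventually near]) (simp add: fst_near)
  ultimately have g_near: "(\<lambda>k. dist (g (y (ik k))) (g (fst (w k)))) \<longlonglongrightarrow> 0"
    by (rule continuous_on_dist_tendsto_zero[OF g_cont])
  have gap_le: "gap k \<le> dist (g (y (ik k))) (g (fst (w k))) + norm (w k - u (ik k))" for k
  proof -
    have "g (fst (w k)) \<le> snd (w k)"
      using w_epi[of k] unfolding epi_def by (cases "w k") auto
    then show ?thesis
      using snd_near[of k] unfolding gap_def dist_real_def by linarith
  qed
  show ?thesis
    by (rule Lim_null_comparison[OF always_eventually tendsto_add_zero[OF g_near near]])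
      (simp add: gap_le gap_bounds(1))
qed

lemma g_x_tendsto: "(\<lambda>k. g (x k)) \<longlonglongrightarrow> gstar"
proof -
  have lower: "gstar \<le> g (x k)" for k
    using gstar_le_G0 G_subset_G0 step4_at_ik(2) by blast
  have upper: "g (x k) \<le> gstar + gap k" for k
    using step4_at_ik(3)[of k] gam_le_gstar[of "ik k"] gap_bounds(2)[of k] by linarith
  have lim: "(\<lambda>k. gstar + gap k) \<longlonglongrightarrow> gstar"
    using tendsto_add[OF tendsto_const gap_tendsto_zero] by simp
  show ?thesis
    by (rule tendsto_sandwich[OF _ _ tendsto_const lim]) (simp_all add: lower upper)
qed

lemma sigma_tendsto: "sigma \<longlonglongrightarrow> gstar"
proof -
  have lower: "gstar - gap k \<le> sigma k" for k
    using step4_at_ik(1)[of k] gstar_le_g_y[of "ik k"] gap_bounds(2)[of k] by linarith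
  have upper: "sigma k \<le> gstar" for k
    using step4_at_ik(1)[of k] gam_le_gstar[of "ik k"] by simp
  have lim: "(\<lambda>k. gstar - gap k) \<longlonglongrightarrow> gstar"
    using tendsto_diff[OF tendsto_const gap_tendsto_zero] by simp
  show ?thesis
    by (rule tendsto_sandwich[OF _ _ lim tendsto_const]) (simp_all add: lower upper)
qed

end

theorem theorem2p4p3:
  fixes f :: "'a::euclidean_space \<Rightarrow> real"
    and D :: "'a set" and fstar \<epsilon> :: real and xstar :: 'a
    and m :: nat and v :: "nat \<Rightarrow> 'a \<times> real" and q :: real
    and G :: "nat \<Rightarrow> 'a set" and M Q :: "nat \<Rightarrow> ('a \<times> real) set"
    and gbar :: "nat \<Rightarrow> real"
    and y :: "nat \<Rightarrow> 'a" and gam :: "nat \<Rightarrow> real"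
    and ubar :: "nat \<Rightarrow> nat \<Rightarrow> 'a \<times> real" and qq :: "nat \<Rightarrow> nat \<Rightarrow> real"
    and A :: "nat \<Rightarrow> nat \<Rightarrow> ('a \<times> real) set"
    and kc :: "nat \<Rightarrow> nat" and delta :: "nat \<Rightarrow> real"
    and sigma :: "nat \<Rightarrow> real" and x :: "nat \<Rightarrow> 'a"
  assumes D: "closed D" "convex D"
    and f_convex: "convex_on UNIV f"
    and fstar_min: "\<forall>z\<in>D. fstar \<le> f z"
    and eps: "\<epsilon> > 0"
    and xstar: "xstar \<in> D" "f xstar = fstar"
    and m: "m \<ge> 1"
    and v: "\<forall>j\<in>{1..m}. v j \<in> interior (epi (\<lambda>z. f z + \<epsilon>))"
    and G0: "closed (G 0)" "convex (G 0)" "bounded (G 0)" "G 0 \<subseteq> D" "xstar \<in> G 0"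
    and M0: "closed (M 0)" "convex (M 0)" "epi (\<lambda>z. f z + \<epsilon>) \<subseteq> M 0"
    and delta0: "delta 0 > 0"
    and gbar0: "gbar 0 \<le> fstar + \<epsilon>"
    and q: "q \<ge> 1"
    and kc0: "kc 0 = 0"
    \<comment> \<open>Step 1: u_i = (y_i, gam_i) solves the auxiliary problem\<close>
    and step1: "\<forall>i. (y i, gam i) \<in> M i \<and> y i \<in> G i \<and> gam i \<ge> gbar i \<and>
                 (\<forall>z \<gamma>. (z, \<gamma>) \<in> M i \<and> z \<in> G i \<and> \<gamma> \<ge> gbar i \<longrightarrow> gam i \<le> \<gamma>)"
    \<comment> \<open>the method does not terminate\<close>
    and nonterm: "\<forall>i. gam i \<noteq> f (y i) + \<epsilon>"
    \<comment> \<open>Step 2\<close>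
    and step2: "\<forall>i. \<forall>j\<in>{1..m}. ubar i j \<in> open_segment (v j) (y i, gam i) \<and>
                 ubar i j \<notin> interior (epi (\<lambda>z. f z + \<epsilon>)) \<and>
                 1 \<le> qq i j \<and> qq i j \<le> q \<and>
                 (y i, gam i) + qq i j *\<^sub>R (ubar i j - (y i, gam i)) \<in> epi (\<lambda>z. f z + \<epsilon>)"
    \<comment> \<open>Steps 3 and 4 (Q_i is always closed convex and contains the epigraph)\<close>
    and Q: "\<forall>i. closed (Q i) \<and> convex (Q i) \<and> epi (\<lambda>z. f z + \<epsilon>) \<subseteq> Q i"
    and step3: "\<forall>i. (\<forall>j\<in>{1..m}. norm (ubar i j - (y i, gam i)) > delta (kc i)) \<longrightarrow>
                 Q i \<subseteq> M i \<and> kc (Suc i) = kc i"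
    and step4: "\<forall>i. (\<exists>j\<in>{1..m}. norm (ubar i j - (y i, gam i)) \<le> delta (kc i)) \<longrightarrow>
                 sigma (kc i) = gam i \<and> x (kc i) \<in> G i \<and>
                 f (x (kc i)) + \<epsilon> \<le> f (y i) + \<epsilon> \<and> kc (Suc i) = Suc (kc i)"
    \<comment> \<open>Step 5\<close>
    and step5A: "\<forall>i. \<forall>j\<in>{1..m}. finite (A i j) \<and> A i j \<noteq> {} \<and>
                 A i j \<subseteq> W1 (ubar i j) (epi (\<lambda>z. f z + \<epsilon>))"
    and step5M: "\<forall>i. M (Suc i) = Q i \<inter>
                 (\<Inter>j\<in>{1..m}. {u. \<forall>a\<in>A i j. inner a (u - ubar i j) \<le> 0})"
    \<comment> \<open>Step 6\<close>
    and step6: "\<forall>i. closed (G (Suc i)) \<and> convex (G (Suc i)) \<and> G (Suc i) \<subseteq> G 0 \<and>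
                 xstar \<in> G (Suc i) \<and> gbar 0 \<le> gbar (Suc i) \<and> gbar (Suc i) \<le> fstar + \<epsilon>"
    \<comment> \<open>the chosen numbers delta_k are positive and tend to zero\<close>
    and delta_pos: "\<forall>k. delta k > 0"
    and delta_lim: "delta \<longlonglongrightarrow> 0"
  shows "(\<forall>k. \<exists>i. kc i = k \<and> (\<exists>j\<in>{1..m}. norm (ubar i j - (y i, gam i)) \<le> delta k))
         \<and> (\<lambda>k. f (x k) + \<epsilon>) \<longlonglongrightarrow> fstar + \<epsilon>
         \<and> sigma \<longlonglongrightarrow> fstar + \<epsilon>"
proof -
  have "continuous_on UNIV f"
    using convex_on_continuous[OF open_UNIV f_convex] .
  interpret run: epi_cutting_plane "\<lambda>z. f z + \<epsilon>" "fstar + \<epsilon>" xstar m v q G M Q gbar y gam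
      ubar qq A kc delta sigma x
  proof unfold_locales
    show "continuous_on UNIV (\<lambda>z. f z + \<epsilon>)"
      using \<open>continuous_on UNIV f\<close> by (intro continuous_intros)
    show "\<forall>z\<in>G 0. fstar + \<epsilon> \<le> f z + \<epsilon>"
      using fstar_min G0(4) by auto
  qed (fact assms | use xstar(2) step2 Q step5A step6 in fast)+
  have "\<exists>i. kc i = k \<and> (\<exists>j\<in>{1..m}. norm (ubar i j - (y i, gam i)) \<le> delta k)" for k
    using run.kc_ik[of k] run.executes_step4_ik[of k] unfolding run.executes_step4_def
    by (intro exI[where x = "run.ik k"]) simp
  then show ?thesis
    using run.g_x_tendsto run.sigma_tendsto by blast
qed

end
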